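(* Let $\lambda,\mu\in\mathbb R$ with $\mu>0$, $3\lambda+2\mu>0$, let $0<\theta_0<\pi/2$ and $$B_{\theta_0}=\{\beta=|\beta|e^{i\theta}\in\mathbb C:\ |\theta|\le\theta_0\ \text{or}\ |\theta-\pi|\le\theta_0\}.$$ With $A=\begin{pmatrix}\lambda+2\mu&0\\0&\mu\end{pmatrix}$, $B=\begin{pmatrix}0&\lambda+\mu\\\lambda+\mu&0\end{pmatrix}$, $C=\begin{pmatrix}\mu&0\\0&\lambda+2\mu\end{pmatrix}$, let $L_0(\xi,\beta)=A\xi^2+\beta B\xi+\beta^2C$. Then: (i) for all $\xi\in\mathbb R$ and $\beta\in B_{\theta_0}$ with $|\xi|+|\beta|\neq0$, $\det L_0(\xi,\beta)\neq0$; (ii) for every $\beta\in B_{\theta_0}$, $\beta\neq0$, the roots (counted with multiplicity) of the degree-four polynomial equation $\det L_0(z,\beta)=0$ in $z\in\mathbb C$ are equally distributed between the open upper and open lower half-planes (two in each). Consequently the differential operator $L(D_1,\beta)=AD_1^2+\beta BD_1+\beta^2C-\omega^2\rho I$ ($D_1=-i\partial_1$, $\omega,\rho>0$), of order $s=2$ acting on $\mathbb C^2$-valued functions with $r=2=Ns/2$ boundary conditions, satisfies the Agranovich–Vishik ellipticity-with-parameter condition on the parameter set $B_{\theta_0}$.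
   Context: The Agranovich–Vishik ellipticity-with-parameter condition for a one-dimensional $N\times N$ system of order $s$ with principal symbol $L_0(\xi,q)$, parameter $q$ in a set $Q$, means: $\det L_0(\xi,q)\ne0$ for real $\xi$, $q\in Q$, $|\xi|+|q|\ne0$; for $q\in Q\setminus\{0\}$ the roots in $z$ of $\det L_0(z,q)=0$ are equally distributed between the upper and lower half-planes; and the number of boundary conditions is $Ns/2$. *)

theory Defs
  imports "HOL-Analysis.Analysis" "HOL-Computational_Algebra.Polynomial"
begin

definition matA :: "real \<Rightarrow> real \<Rightarrow> real^2^2" where
  "matA lam mu = (\<chi> i j. if i = 1 \<and> j = 1 then lam + 2*mu
                          else if i = 2 \<and> j = 2 then mu else 0)"

definition matB :: "real \<Rightarrow> real \<Rightarrow> real^2^2" where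
  "matB lam mu = (\<chi> i j. if i \<noteq> j then lam + mu else 0)"

definition matC :: "real \<Rightarrow> real \<Rightarrow> real^2^2" where
  "matC lam mu = (\<chi> i j. if i = 1 \<and> j = 1 then mu
                          else if i = 2 \<and> j = 2 then lam + 2*mu else 0)"

definition L0poly :: "real \<Rightarrow> real \<Rightarrow> complex \<Rightarrow> complex poly^2^2" where
  "L0poly lam mu \<beta> = (\<chi> i j. [: \<beta>^2 * of_real (matC lam mu $ i $ j),
                                 \<beta> * of_real (matB lam mu $ i $ j),
                                 of_real (matA lam mu $ i $ j) :])"

definition Bset :: "real \<Rightarrow> complex set" where
  "Bset \<theta>0 = {\<beta>. \<exists>\<theta>. \<beta> = complex_of_real (cmod \<beta>) * cis \<theta> \<and>
                        (\<bar>\<theta>\<bar> \<le> \<theta>0 \<or> \<bar>\<theta> - pi\<bar> \<le> \<theta>0)}"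

definition roots_upper :: "complex poly \<Rightarrow> nat" where
  "roots_upper p = (\<Sum>z\<in>{z. Im z > 0 \<and> poly p z = 0}. order z p)"

definition roots_lower :: "complex poly \<Rightarrow> nat" where
  "roots_lower p = (\<Sum>z\<in>{z. Im z < 0 \<and> poly p z = 0}. order z p)"

text \<open>Agranovich--Vishik ellipticity with parameter for a one-dimensional
  N x N system of order s with r boundary conditions, parameter set Q,
  given through \<open>detL0 q\<close> = the polynomial \<open>z \<mapsto> det L0(z,q)\<close>.\<close>
definition AV_elliptic ::
  "nat \<Rightarrow> nat \<Rightarrow> nat \<Rightarrow> complex set \<Rightarrow> (complex \<Rightarrow> complex poly) \<Rightarrow> bool" where
  "AV_elliptic N s r Q detL0 \<longleftrightarrow>
     (\<forall>\<xi>::real. \<forall>q\<in>Q. \<bar>\<xi>\<bar> + cmod q \<noteq> 0 \<longrightarrow> poly (detL0 q) (of_real \<xi>) \<noteq> 0) \<and>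
     (\<forall>q\<in>Q - {0}. roots_upper (detL0 q) = roots_lower (detL0 q)) \<and>
     2 * r = N * s"

end

theory Submission
  imports Defs
begin

text \<open>The symbol factors as
  \<open>det L0(z,\<beta>) = (\<lambda>+2\<mu>)\<mu> (z - i\<beta>)\<^sup>2 (z + i\<beta>)\<^sup>2\<close>, and \<open>(\<lambda>+2\<mu>)\<mu> > 0\<close>
  because \<open>\<lambda> + 2\<mu> > 4\<mu>/3\<close>. On \<open>B_\<theta>0 - {0}\<close> the real part of \<open>\<beta>\<close> does not vanish
  (the sectors avoid the imaginary axis since \<open>\<theta>0 < \<pi>/2\<close>), so the double roots
  \<open>\<plusminus>i\<beta>\<close> are non-real and lie in opposite half-planes.\<close>

definition double_root_pair :: "'a::comm_ring_1 \<Rightarrow> 'a \<Rightarrow> 'a poly" where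
  "double_root_pair c w = smult c ([:-w, 1:]^2 * [:w, 1:]^2)"

lemma poly_double_root_pair: "poly (double_root_pair c w) z = c * (z - w)^2 * (z + w)^2"
  by (simp add: double_root_pair_def algebra_simps power2_eq_square)

lemma double_root_pair_swap: "double_root_pair c (-w) = double_root_pair c w"
  by (simp add: double_root_pair_def mult.commute)

lemma degree_double_root_pair:
  fixes c :: "'a::idom"
  assumes "c \<noteq> 0"
  shows "degree (double_root_pair c w) = 4"
  using assms by (simp add: double_root_pair_def degree_mult_eq degree_power_eq)

lemma poly_double_root_pair_eq_0_iff:
  fixes c :: "'a::idom"
  assumes "c \<noteq> 0"
  shows "poly (double_root_pair c w) z = 0 \<longleftrightarrow> z = w \<or> z = -w"
  using assms by (auto simp: poly_double_root_pair eq_neg_iff_add_eq_0)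

lemma order_double_root_pair:
  fixes c :: "'a::{idom, ring_char_0}"
  assumes "c \<noteq> 0" and "w \<noteq> 0"
  shows "order w (double_root_pair c w) = 2"
proof -
  have "order w ([:w, 1:]^2) = 0"
    using assms(2) by (intro order_0I) simp
  moreover have "[:-w, 1:]^2 * [:w, 1:]^2 \<noteq> 0"
    by simp
  ultimately show ?thesis
    using assms(1) by (simp add: double_root_pair_def order_smult order_mult order_power_n_n)
qed

lemma order_neg_double_root_pair:
  fixes c :: "'a::{idom, ring_char_0}"
  assumes "c \<noteq> 0" and "w \<noteq> 0"
  shows "order (-w) (double_root_pair c w) = 2"
  using order_double_root_pair[of c "-w"] assms by (simp add: double_root_pair_swap)

lemma roots_upper_lower_double_root_pair:
  assumes "c \<noteq> 0" and "Im w \<noteq> 0"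
  shows "roots_upper (double_root_pair c w) = 2 \<and> roots_lower (double_root_pair c w) = 2"
proof -
  have w: "w \<noteq> 0"
    using assms(2) by auto
  have upper: "{z. Im z > 0 \<and> poly (double_root_pair c w) z = 0} = (if Im w > 0 then {w} else {-w})"
   and lower: "{z. Im z < 0 \<and> poly (double_root_pair c w) z = 0} = (if Im w > 0 then {-w} else {w})"
    using assms by (auto simp: poly_double_root_pair_eq_0_iff)
  show ?thesis
    unfolding roots_upper_def roots_lower_def upper lower
    using order_double_root_pair[OF assms(1) w] order_neg_double_root_pair[OF assms(1) w] by simp
qed

lemma Re_nonzero_if_in_Bset:
  assumes "\<beta> \<in> Bset \<theta>0" and "\<theta>0 < pi/2" and "\<beta> \<noteq> 0"
  shows "Re \<beta> \<noteq> 0"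
proof -
  obtain \<theta> where \<theta>: "\<beta> = complex_of_real (cmod \<beta>) * cis \<theta>" "\<bar>\<theta>\<bar> \<le> \<theta>0 \<or> \<bar>\<theta> - pi\<bar> \<le> \<theta>0"
    using assms(1) by (auto simp: Bset_def)
  have "Re \<beta> = cmod \<beta> * cos \<theta>"
    by (subst \<theta>(1)) simp
  moreover have "cos \<theta> \<noteq> 0"
  proof (cases "\<bar>\<theta>\<bar> \<le> \<theta>0")
    case True
    then have "cos \<theta> > 0"
      using assms(2) by (intro cos_gt_zero_pi) auto
    then show ?thesis by simp
  next
    case False
    then have "cos (\<theta> - pi) > 0"
      using \<theta>(2) assms(2) by (intro cos_gt_zero_pi) auto
    then show ?thesis by (simp add: cos_diff)
  qed
  ultimately show ?thesis
    using assms(3) by simp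
qed

lemma det_L0poly:
  "det (L0poly lam mu \<beta>) = double_root_pair (of_real ((lam + 2*mu) * mu)) (\<i> * \<beta>)"
proof -
  have "poly (det (L0poly lam mu \<beta>)) z = poly (double_root_pair (of_real ((lam + 2*mu) * mu)) (\<i> * \<beta>)) z"
    for z
    by (simp add: det_2 L0poly_def matA_def matB_def matC_def poly_double_root_pair
        algebra_simps power2_eq_square eval_nat_numeral)
  then show ?thesis
    by (simp add: poly_eq_poly_eq_iff[symmetric] fun_eq_iff)
qed

theorem lemma1:
  fixes lam mu \<theta>0 :: real
  assumes "mu > 0" and "3*lam + 2*mu > 0"
    and "0 < \<theta>0" and "\<theta>0 < pi/2"
  shows "(\<forall>\<xi>::real. \<forall>\<beta>\<in>Bset \<theta>0. \<bar>\<xi>\<bar> + cmod \<beta> \<noteq> 0 \<longrightarrow>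
            poly (det (L0poly lam mu \<beta>)) (of_real \<xi>) \<noteq> 0)
       \<and> (\<forall>\<beta>\<in>Bset \<theta>0. \<beta> \<noteq> 0 \<longrightarrow>
            degree (det (L0poly lam mu \<beta>)) = 4 \<and>
            roots_upper (det (L0poly lam mu \<beta>)) = 2 \<and>
            roots_lower (det (L0poly lam mu \<beta>)) = 2)
       \<and> AV_elliptic 2 2 2 (Bset \<theta>0) (\<lambda>\<beta>. det (L0poly lam mu \<beta>))"
proof -
  define c where "c = complex_of_real ((lam + 2*mu) * mu)"
  have "(lam + 2*mu) * mu > 0"
    using assms(1,2) by simp
  then have c: "c \<noteq> 0"
    unfolding c_def by (metis of_real_eq_0_iff less_irrefl)
  have det: "det (L0poly lam mu \<beta>) = double_root_pair c (\<i> * \<beta>)" for \<beta>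
    unfolding c_def by (rule det_L0poly)
  have Im_root: "Im (\<i> * \<beta>) \<noteq> 0" if "\<beta> \<in> Bset \<theta>0" "\<beta> \<noteq> 0" for \<beta>
    using Re_nonzero_if_in_Bset[OF that(1) assms(4) that(2)] by simp
  have real_nonroot: "poly (det (L0poly lam mu \<beta>)) (of_real \<xi>) \<noteq> 0"
    if "\<beta> \<in> Bset \<theta>0" "\<bar>\<xi>\<bar> + cmod \<beta> \<noteq> 0" for \<xi> \<beta>
  proof
    assume "poly (det (L0poly lam mu \<beta>)) (of_real \<xi>) = 0"
    then have "of_real \<xi> = \<i> * \<beta> \<or> of_real \<xi> = - (\<i> * \<beta>)"
      by (simp add: det poly_double_root_pair_eq_0_iff[OF c])
    then have "Im (\<i> * \<beta>) = 0" and "\<bar>\<xi>\<bar> = cmod \<beta>"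
      by (auto dest: arg_cong[of _ _ Im] arg_cong[of _ _ cmod] simp: norm_mult)
    then show False
      using that Im_root[of \<beta>] by auto
  qed
  have half_planes: "degree (det (L0poly lam mu \<beta>)) = 4 \<and>
      roots_upper (det (L0poly lam mu \<beta>)) = 2 \<and> roots_lower (det (L0poly lam mu \<beta>)) = 2"
    if "\<beta> \<in> Bset \<theta>0" "\<beta> \<noteq> 0" for \<beta>
    unfolding det
    using degree_double_root_pair[OF c] roots_upper_lower_double_root_pair[OF c Im_root[OF that]]
    by simp
  show ?thesis
    using real_nonroot half_planes unfolding AV_elliptic_def by auto
qed

end
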